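(* Assume the setting in the context, with a decomposition of $\mathcal X$ over $A$ and a cost function $g\in\mathcal G_s$. If $$\mathcal R(B)=\bigoplus_{i\in\mathcal I}\big[\mathcal R(B)\cap\mathcal X_i\big],$$ then $\{(A,B|_{\mathcal E_i},g,T)\}_{i\in\mathcal I}$ is a decomposition of $(A,B,g,T)$ for every integer $T>0$, and $\{(A,B|_{\mathcal E_i},g,\alpha)\}_{i\in\mathcal I}$ is a decomposition of $(A,B,g,\alpha)$ for every $\alpha\in(0,1)$.
   Context: Let $\mathcal F$ be a field and $\mathcal X,\mathcal U$ finite-dimensional vector spaces over $\mathcal F$. Let $A:\mathcal X\to\mathcal X$ and $B:\mathcal U\to\mathcal X$ be linear maps with $B$ injective; $\mathcal R(B)$ is the range of $B$. Consider the system $x_{t+1}=Ax_t+Bu_t$ and a cost $g:\mathcal X\to\mathbb R_{\ge 0}$ with $g(x)=0\iff x=0$. Standing assumption: all minima appearing below are attained. Finite-horizon problem $(A,B,g,T)$ ($T>0$ integer): policies $\pi(x_0)=(\pi_t(x_0))_{t=0}^{T-1}\in\mathcal U^T$, cost $J(x_0,\pi)=\sum_{t=0}^T g(x_t)$ with $x_{t+1}=Ax_t+B\pi_t(x_0)$. Infinite-horizon problem $(A,B,g,\alpha)$ ($\alpha\in(0,1)$): policies $\pi(x_0)\in\mathcal U^{\mathbb Z_+}$, cost $J(x_0,\pi)=\sum_{t\ge0}\alpha^tg(x_t)$. In both, $J^*(x_0)=\min_\pi J(x_0,\pi)$ and a minimizing policy is optimal at $x_0$. A decomposition of $\mathcal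 X$ over $A$ is a direct sum $\mathcal X=\mathcal X_1\oplus\cdots\oplus\mathcal X_r$ with $r>1$ and $A\mathcal X_i\subseteq\mathcal X_i$, $i\in\mathcal I=\{1,\dots,r\}$; $\rho_i:\mathcal X\to\mathcal X_i$ is the projection along the other summands. $\mathcal G_s$ is the set of $h:\mathcal X\to\mathbb R_{\ge0}$ with $h(x)=\sum_i h(\rho_i(x))$ for all $x$. $\mathcal E_i=\{u\in\mathcal U:Bu\in\mathcal X_i\}$. Subproblems $(A,B|_{\mathcal E_i},g,T)$ and $(A,B|_{\mathcal E_i},g,\alpha)$: the same problems for the system $x_{i,t+1}=Ax_{i,t}+B\bar u_{i,t}$ with states in $\mathcal X_i$ and inputs in $\mathcal E_i$; optimal costs $\bar J_i^*$, optimal policies $\bar\pi_i^*$. Definition 1: the family of subproblems is a decomposition of the original problem if for every $x\in\mathcal X$: $J^*(x)=\sum_i\bar J_i^*(\rho_i(x))$, and for every choice of optimal policies $\bar\pi_i^*(\rho_i(x))$ there exists an optimal policy $\pi^*(x)$ of the original problem with $\pi^*(x)=\sum_i\bar\pi_i^*(\rho_i(x))$ (componentwise sum). *)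

theory Defs
  imports Complex_Main "HOL-Library.Extended_Nonnegative_Real"
begin

definition fin_dim_vs :: "('f::field \<Rightarrow> 'v::ab_group_add \<Rightarrow> 'v) \<Rightarrow> bool" where
  "fin_dim_vs s \<longleftrightarrow> (\<exists>Bs. finite_dimensional_vector_space s Bs)"

definition direct_sum_of ::
  "('f::field \<Rightarrow> 'v::ab_group_add \<Rightarrow> 'v) \<Rightarrow> 'v set \<Rightarrow> nat set \<Rightarrow> (nat \<Rightarrow> 'v set) \<Rightarrow> bool" where
  "direct_sum_of s V I W \<longleftrightarrow>
     (\<forall>i\<in>I. module.subspace s (W i) \<and> W i \<subseteq> V) \<and>
     (\<forall>v\<in>V. \<exists>!w. (\<forall>i. (i \<in> I \<longrightarrow> w i \<in> W i) \<and> (i \<notin> I \<longrightarrow> w i = 0)) \<and> v = sum w I)"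

definition proj :: "nat set \<Rightarrow> (nat \<Rightarrow> 'v::ab_group_add set) \<Rightarrow> nat \<Rightarrow> 'v \<Rightarrow> 'v" where
  "proj I X i x = (THE w. (\<forall>j. (j \<in> I \<longrightarrow> w j \<in> X j) \<and> (j \<notin> I \<longrightarrow> w j = 0)) \<and> x = sum w I) i"

fun traj :: "('x::ab_group_add \<Rightarrow> 'x) \<Rightarrow> ('u \<Rightarrow> 'x) \<Rightarrow> 'x \<Rightarrow> (nat \<Rightarrow> 'u) \<Rightarrow> nat \<Rightarrow> 'x" where
  "traj A B x0 u 0 = x0"
| "traj A B x0 u (Suc t) = A (traj A B x0 u t) + B (u t)"

(* ---- finite horizon T; a policy value at x0 is an element of E^T,
        represented as a sequence that vanishes from time T on ---- *)
definition fin_adm :: "'u::zero set \<Rightarrow> nat \<Rightarrow> (nat \<Rightarrow> 'u) \<Rightarrow> bool" where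
  "fin_adm E T u \<longleftrightarrow> (\<forall>t<T. u t \<in> E) \<and> (\<forall>t\<ge>T. u t = 0)"

definition Jfin :: "('x::ab_group_add \<Rightarrow> 'x) \<Rightarrow> ('u \<Rightarrow> 'x) \<Rightarrow> ('x \<Rightarrow> real) \<Rightarrow> nat \<Rightarrow> 'x \<Rightarrow> (nat \<Rightarrow> 'u) \<Rightarrow> real" where
  "Jfin A B g T x0 u = (\<Sum>t\<le>T. g (traj A B x0 u t))"

definition Jfin_star :: "('x::ab_group_add \<Rightarrow> 'x) \<Rightarrow> ('u::zero \<Rightarrow> 'x) \<Rightarrow> 'u set \<Rightarrow> ('x \<Rightarrow> real) \<Rightarrow> nat \<Rightarrow> 'x \<Rightarrow> real" where
  "Jfin_star A B E g T x0 = Inf {Jfin A B g T x0 u | u. fin_adm E T u}"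

definition fin_opt :: "('x::ab_group_add \<Rightarrow> 'x) \<Rightarrow> ('u::zero \<Rightarrow> 'x) \<Rightarrow> 'u set \<Rightarrow> ('x \<Rightarrow> real) \<Rightarrow> nat \<Rightarrow> 'x \<Rightarrow> (nat \<Rightarrow> 'u) \<Rightarrow> bool" where
  "fin_opt A B E g T x0 u \<longleftrightarrow> fin_adm E T u \<and> (\<forall>v. fin_adm E T v \<longrightarrow> Jfin A B g T x0 u \<le> Jfin A B g T x0 v)"

definition inf_adm :: "'u set \<Rightarrow> (nat \<Rightarrow> 'u) \<Rightarrow> bool" where
  "inf_adm E u \<longleftrightarrow> (\<forall>t. u t \<in> E)"

definition Jinf :: "('x::ab_group_add \<Rightarrow> 'x) \<Rightarrow> ('u \<Rightarrow> 'x) \<Rightarrow> ('x \<Rightarrow> real) \<Rightarrow> real \<Rightarrow> 'x \<Rightarrow> (nat \<Rightarrow> 'u) \<Rightarrow> ennreal" where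
  "Jinf A B g \<alpha> x0 u = (\<Sum>t. ennreal (\<alpha> ^ t * g (traj A B x0 u t)))"

definition Jinf_star :: "('x::ab_group_add \<Rightarrow> 'x) \<Rightarrow> ('u \<Rightarrow> 'x) \<Rightarrow> 'u set \<Rightarrow> ('x \<Rightarrow> real) \<Rightarrow> real \<Rightarrow> 'x \<Rightarrow> ennreal" where
  "Jinf_star A B E g \<alpha> x0 = Inf {Jinf A B g \<alpha> x0 u | u. inf_adm E u}"

definition inf_opt :: "('x::ab_group_add \<Rightarrow> 'x) \<Rightarrow> ('u \<Rightarrow> 'x) \<Rightarrow> 'u set \<Rightarrow> ('x \<Rightarrow> real) \<Rightarrow> real \<Rightarrow> 'x \<Rightarrow> (nat \<Rightarrow> 'u) \<Rightarrow> bool" where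
  "inf_opt A B E g \<alpha> x0 u \<longleftrightarrow> inf_adm E u \<and> (\<forall>v. inf_adm E v \<longrightarrow> Jinf A B g \<alpha> x0 u \<le> Jinf A B g \<alpha> x0 v)"

end

theory Submission
  imports Defs
begin

(* Because R(B) splits along the decomposition X = X_1 + ... + X_r, every input u
   splits uniquely as u = sum_i u_i with B u_i in X_i (u_i = B^-1 (rho_i (B u))).  Since A and B are
   additive and every X_i is A-invariant, trajectories superpose: driving x with sum_i u_i gives the
   sum of the trajectories driven by u_i from rho_i x, the i-th one staying in X_i.  A separable
   cost therefore splits as J(x, sum_i u_i) = sum_i J_i(rho_i x, u_i), for both cost criteria.
   An abstract lemma then shows that summing minimizers of the component problems gives a minimizer
   of the full problem whose cost is the sum of the component optima; a second one identifies the
   optimal value (an infimum) with the cost of any optimal policy. *)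

abbreviation components :: "nat set \<Rightarrow> (nat \<Rightarrow> 'v::zero set) \<Rightarrow> (nat \<Rightarrow> 'v) \<Rightarrow> bool" where
  "components I X w \<equiv> \<forall>i. (i \<in> I \<longrightarrow> w i \<in> X i) \<and> (i \<notin> I \<longrightarrow> w i = 0)"

lemma Inf_eq_optimal_cost:
  fixes J :: "'p \<Rightarrow> 'c::conditionally_complete_lattice"
  assumes "adm u0" and "\<forall>v. adm v \<longrightarrow> J u0 \<le> J v"
  shows "Inf {J u | u. adm u} = J u0"
  by (rule cInf_eq_minimum) (use assms in auto)

lemma combination_of_minimizers:
  fixes J :: "'p \<Rightarrow> 'c::ordered_comm_monoid_add" and Js :: "nat \<Rightarrow> 'q \<Rightarrow> 'c"
  assumes combine_adm: "\<And>vs. (\<forall>i\<in>I. adms i (vs i)) \<Longrightarrow> adm (comb vs)"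
    and split_cost: "\<And>vs. (\<forall>i\<in>I. adms i (vs i)) \<Longrightarrow> J (comb vs) = (\<Sum>i\<in>I. Js i (vs i))"
    and decompose: "\<And>v. adm v \<Longrightarrow> \<exists>vs. (\<forall>i\<in>I. adms i (vs i)) \<and> v = comb vs"
    and opt: "\<forall>i\<in>I. adms i (us i) \<and> (\<forall>v. adms i v \<longrightarrow> Js i (us i) \<le> Js i v)"
  shows "adm (comb us) \<and> (\<forall>v. adm v \<longrightarrow> J (comb us) \<le> J v)"
proof (intro conjI allI impI)
  show "adm (comb us)" using opt by (intro combine_adm) blast
  fix v assume "adm v"
  then obtain vs where vs: "\<forall>i\<in>I. adms i (vs i)" and v: "v = comb vs" using decompose by blast
  have "J (comb us) = (\<Sum>i\<in>I. Js i (us i))" using opt by (intro split_cost) blast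
  also have "\<dots> \<le> (\<Sum>i\<in>I. Js i (vs i))" using opt vs by (intro sum_mono) blast
  also have "\<dots> = J v" using split_cost[OF vs] v by simp
  finally show "J (comb us) \<le> J v" .
qed

locale decomposed_system =
  fixes A :: "'x::ab_group_add \<Rightarrow> 'x" and B :: "'u::ab_group_add \<Rightarrow> 'x"
    and I :: "nat set" and X :: "nat \<Rightarrow> 'x set"
  assumes finite_I: "finite I"
    and unique_components: "\<And>v. \<exists>!w. components I X w \<and> v = sum w I"
    and zero_mem: "\<And>i. i \<in> I \<Longrightarrow> 0 \<in> X i"
    and add_mem: "\<And>i a b. i \<in> I \<Longrightarrow> a \<in> X i \<Longrightarrow> b \<in> X i \<Longrightarrow> a + b \<in> X i"
    and A_add: "\<And>a b. A (a + b) = A a + A b"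
    and B_add: "\<And>a b. B (a + b) = B a + B b"
    and inj_B: "inj B"
    and A_invariant: "\<And>i a. i \<in> I \<Longrightarrow> a \<in> X i \<Longrightarrow> A a \<in> X i"
    and range_B_split: "\<And>i u. i \<in> I \<Longrightarrow> proj I X i (B u) \<in> range B"
begin

abbreviation rho :: "nat \<Rightarrow> 'x \<Rightarrow> 'x" where "rho i \<equiv> proj I X i"

lemma A_zero: "A 0 = 0" using A_add[of 0 0] by simp

lemma B_zero: "B 0 = 0" using B_add[of 0 0] by simp

lemma A_sum: "A (sum f S) = (\<Sum>i\<in>S. A (f i))"
  by (induction S rule: infinite_finite_induct) (auto simp: A_zero A_add)

lemma B_sum: "B (sum f S) = (\<Sum>i\<in>S. B (f i))"
  by (induction S rule: infinite_finite_induct) (auto simp: B_zero B_add)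

lemma rho_components: "components I X (\<lambda>i. rho i x) \<and> x = (\<Sum>i\<in>I. rho i x)"
proof -
  let ?Q = "\<lambda>w. components I X w \<and> x = sum w I"
  have "?Q (THE w. ?Q w)" by (rule theI'[OF unique_components])
  moreover have "(\<lambda>i. rho i x) = (THE w. ?Q w)" unfolding proj_def by simp
  ultimately show ?thesis by metis
qed

lemma rho_mem: "i \<in> I \<Longrightarrow> rho i x \<in> X i" using rho_components by blast

lemma sum_rho: "(\<Sum>i\<in>I. rho i x) = x" using rho_components by simp

lemma rho_sum:
  assumes "\<And>j. j \<in> I \<Longrightarrow> w j \<in> X j" and "i \<in> I"
  shows "rho i (sum w I) = w i"
proof -
  let ?w = "\<lambda>j. if j \<in> I then w j else 0"
  have "sum ?w I = sum w I" by (rule sum.cong) auto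
  moreover have "(THE w'. components I X w' \<and> sum ?w I = sum w' I) = ?w"
    by (rule the1_equality[OF unique_components]) (use assms in auto)
  ultimately show ?thesis unfolding proj_def using assms(2) by simp
qed

definition input_comp :: "nat \<Rightarrow> 'u \<Rightarrow> 'u" where
  "input_comp i u = inv B (rho i (B u))"

lemma B_input_comp: "i \<in> I \<Longrightarrow> B (input_comp i u) = rho i (B u)"
  unfolding input_comp_def using range_B_split by (simp add: f_inv_into_f)

lemma B_input_comp_mem: "i \<in> I \<Longrightarrow> B (input_comp i u) \<in> X i"
  using B_input_comp rho_mem by simp

lemma sum_input_comp: "(\<Sum>i\<in>I. input_comp i u) = u"
proof -
  have "B (\<Sum>i\<in>I. input_comp i u) = (\<Sum>i\<in>I. rho i (B u))" by (simp add: B_sum B_input_comp)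
  also have "\<dots> = B u" by (rule sum_rho)
  finally show ?thesis using inj_B by (simp add: inj_eq)
qed

lemma input_comp_zero: "i \<in> I \<Longrightarrow> input_comp i 0 = 0"
  using B_input_comp[of i 0] rho_sum[of "\<lambda>_. 0" i] zero_mem inj_B
  by (simp add: B_zero injD[OF inj_B, of _ 0])

lemma traj_superposition:
  assumes "\<And>i t. i \<in> I \<Longrightarrow> B (us i t) \<in> X i" and "\<And>i. i \<in> I \<Longrightarrow> xs i \<in> X i"
  shows "(\<forall>i\<in>I. traj A B (xs i) (us i) t \<in> X i) \<and>
    traj A B (sum xs I) (\<lambda>t. \<Sum>i\<in>I. us i t) t = (\<Sum>i\<in>I. traj A B (xs i) (us i) t)"
proof (induction t)
  case 0 then show ?case using assms by simp
next
  case (Suc t)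
  then show ?case using assms by (auto simp: A_sum B_sum sum.distrib intro!: add_mem A_invariant)
qed

end

locale separable_cost = decomposed_system A B I X
  for A :: "'x::ab_group_add \<Rightarrow> 'x" and B :: "'u::ab_group_add \<Rightarrow> 'x" and I X +
  fixes g :: "'x \<Rightarrow> real"
  assumes g_sep: "\<And>x. g x = (\<Sum>i\<in>I. g (rho i x))"
    and g_nonneg: "\<And>x. g x \<ge> 0"
begin

lemma stage_cost_split:
  assumes "\<And>i t. i \<in> I \<Longrightarrow> B (us i t) \<in> X i"
  shows "g (traj A B x (\<lambda>t. \<Sum>i\<in>I. us i t) t) = (\<Sum>i\<in>I. g (traj A B (rho i x) (us i) t))"
proof -
  have sup: "(\<forall>i\<in>I. traj A B (rho i x) (us i) t \<in> X i) \<and>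
     traj A B (\<Sum>i\<in>I. rho i x) (\<lambda>t. \<Sum>i\<in>I. us i t) t = (\<Sum>i\<in>I. traj A B (rho i x) (us i) t)"
    by (rule traj_superposition) (use assms rho_mem in auto)
  then have "g (traj A B x (\<lambda>t. \<Sum>i\<in>I. us i t) t)
      = (\<Sum>i\<in>I. g (rho i (\<Sum>j\<in>I. traj A B (rho j x) (us j) t)))"
    by (subst g_sep) (simp add: sum_rho)
  also have "\<dots> = (\<Sum>i\<in>I. g (traj A B (rho i x) (us i) t))"
    by (rule sum.cong) (use sup rho_sum in auto)
  finally show ?thesis .
qed

lemma Jfin_split:
  assumes "\<And>i t. i \<in> I \<Longrightarrow> B (us i t) \<in> X i"
  shows "Jfin A B g T x (\<lambda>t. \<Sum>i\<in>I. us i t) = (\<Sum>i\<in>I. Jfin A B g T (rho i x) (us i))"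
  unfolding Jfin_def using stage_cost_split[OF assms] by (simp add: sum.swap[of _ I])

(* For the discounted cost the exchange of the series with the finite sum is done in ennreal,
   where all terms are nonnegative. *)
lemma Jinf_split:
  assumes "\<And>i t. i \<in> I \<Longrightarrow> B (us i t) \<in> X i" and "\<alpha> > 0"
  shows "Jinf A B g \<alpha> x (\<lambda>t. \<Sum>i\<in>I. us i t) = (\<Sum>i\<in>I. Jinf A B g \<alpha> (rho i x) (us i))"
proof -
  have stage: "ennreal (\<alpha> ^ t * g (traj A B x (\<lambda>t. \<Sum>i\<in>I. us i t) t)) =
     (\<Sum>i\<in>I. ennreal (\<alpha> ^ t * g (traj A B (rho i x) (us i) t)))" for t
    using assms(2) g_nonneg
    by (simp add: stage_cost_split[OF assms(1)] sum_distrib_left sum_ennreal)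
  show ?thesis unfolding Jinf_def stage by (rule suminf_sum) auto
qed

lemma finite_horizon_decomposition:
  assumes opt: "\<forall>i\<in>I. fin_opt A B {u. B u \<in> X i} g T (rho i x) (us i)"
  shows "fin_opt A B UNIV g T x (\<lambda>t. \<Sum>i\<in>I. us i t) \<and>
    Jfin_star A B UNIV g T x = (\<Sum>i\<in>I. Jfin_star A B {u. B u \<in> X i} g T (rho i x))"
proof -
  have comp_mem: "B (vs i t) \<in> X i" if "i \<in> I" "fin_adm {u. B u \<in> X i} T (vs i)" for vs i t
    using that zero_mem B_zero unfolding fin_adm_def by (cases "t < T") auto
  have optimal: "fin_opt A B UNIV g T x (\<lambda>t. \<Sum>i\<in>I. us i t)"
    unfolding fin_opt_def
  proof (rule combination_of_minimizers[where adms = "\<lambda>i. fin_adm {u. B u \<in> X i} T"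
      and comb = "\<lambda>vs t. \<Sum>i\<in>I. vs i t" and Js = "\<lambda>i. Jfin A B g T (rho i x)"])
    fix vs assume adm: "\<forall>i\<in>I. fin_adm {u. B u \<in> X i} T (vs i)"
    then show "fin_adm UNIV T (\<lambda>t. \<Sum>i\<in>I. vs i t)" by (simp add: fin_adm_def)
    show "Jfin A B g T x (\<lambda>t. \<Sum>i\<in>I. vs i t) = (\<Sum>i\<in>I. Jfin A B g T (rho i x) (vs i))"
      using adm comp_mem by (intro Jfin_split) blast
  next
    fix v :: "nat \<Rightarrow> 'u" assume "fin_adm UNIV T v"
    then have "\<forall>i\<in>I. fin_adm {u. B u \<in> X i} T (\<lambda>t. input_comp i (v t))"
      by (simp add: fin_adm_def B_input_comp_mem input_comp_zero)
    then show "\<exists>vs. (\<forall>i\<in>I. fin_adm {u. B u \<in> X i} T (vs i)) \<and> v = (\<lambda>t. \<Sum>i\<in>I. vs i t)"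
      by (auto simp: sum_input_comp)
  qed (use opt in \<open>simp add: fin_opt_def\<close>)
  have "Jfin_star A B UNIV g T x = Jfin A B g T x (\<lambda>t. \<Sum>i\<in>I. us i t)"
    using optimal unfolding Jfin_star_def fin_opt_def by (intro Inf_eq_optimal_cost) auto
  also have "\<dots> = (\<Sum>i\<in>I. Jfin A B g T (rho i x) (us i))"
    using opt comp_mem by (intro Jfin_split) (auto simp: fin_opt_def)
  also have "\<dots> = (\<Sum>i\<in>I. Jfin_star A B {u. B u \<in> X i} g T (rho i x))"
    using opt unfolding Jfin_star_def fin_opt_def by (intro sum.cong refl Inf_eq_optimal_cost[symmetric]) auto
  finally show ?thesis using optimal by simp
qed

lemma infinite_horizon_decomposition:
  assumes opt: "\<forall>i\<in>I. inf_opt A B {u. B u \<in> X i} g \<alpha> (rho i x) (us i)" and "\<alpha> > 0"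
  shows "inf_opt A B UNIV g \<alpha> x (\<lambda>t. \<Sum>i\<in>I. us i t) \<and>
    Jinf_star A B UNIV g \<alpha> x = (\<Sum>i\<in>I. Jinf_star A B {u. B u \<in> X i} g \<alpha> (rho i x))"
proof -
  have optimal: "inf_opt A B UNIV g \<alpha> x (\<lambda>t. \<Sum>i\<in>I. us i t)"
    unfolding inf_opt_def
  proof (rule combination_of_minimizers[where adms = "\<lambda>i. inf_adm {u. B u \<in> X i}"
      and comb = "\<lambda>vs t. \<Sum>i\<in>I. vs i t" and Js = "\<lambda>i. Jinf A B g \<alpha> (rho i x)"])
    fix vs assume adm: "\<forall>i\<in>I. inf_adm {u. B u \<in> X i} (vs i)"
    show "inf_adm UNIV (\<lambda>t. \<Sum>i\<in>I. vs i t)" by (simp add: inf_adm_def)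
    show "Jinf A B g \<alpha> x (\<lambda>t. \<Sum>i\<in>I. vs i t) = (\<Sum>i\<in>I. Jinf A B g \<alpha> (rho i x) (vs i))"
      using adm \<open>\<alpha> > 0\<close> by (intro Jinf_split) (auto simp: inf_adm_def)
  next
    fix v :: "nat \<Rightarrow> 'u"
    have "\<forall>i\<in>I. inf_adm {u. B u \<in> X i} (\<lambda>t. input_comp i (v t))"
      by (simp add: inf_adm_def B_input_comp_mem)
    then show "\<exists>vs. (\<forall>i\<in>I. inf_adm {u. B u \<in> X i} (vs i)) \<and> v = (\<lambda>t. \<Sum>i\<in>I. vs i t)"
      by (auto simp: sum_input_comp)
  qed (use opt in \<open>simp add: inf_opt_def\<close>)
  have "Jinf_star A B UNIV g \<alpha> x = Jinf A B g \<alpha> x (\<lambda>t. \<Sum>i\<in>I. us i t)"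
    using optimal unfolding Jinf_star_def inf_opt_def by (intro Inf_eq_optimal_cost) auto
  also have "\<dots> = (\<Sum>i\<in>I. Jinf A B g \<alpha> (rho i x) (us i))"
    using opt \<open>\<alpha> > 0\<close> by (intro Jinf_split) (auto simp: inf_opt_def inf_adm_def)
  also have "\<dots> = (\<Sum>i\<in>I. Jinf_star A B {u. B u \<in> X i} g \<alpha> (rho i x))"
    using opt unfolding Jinf_star_def inf_opt_def by (intro sum.cong refl Inf_eq_optimal_cost[symmetric]) auto
  finally show ?thesis using optimal by simp
qed

corollary finite_horizon_value_split:
  assumes "\<forall>i\<in>I. \<forall>x\<in>X i. \<exists>u. fin_opt A B {u. B u \<in> X i} g T x u"
  shows "Jfin_star A B UNIV g T x = (\<Sum>i\<in>I. Jfin_star A B {u. B u \<in> X i} g T (rho i x))"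
proof -
  have "\<forall>i\<in>I. \<exists>u. fin_opt A B {u. B u \<in> X i} g T (rho i x) u" using assms rho_mem by blast
  then obtain us where "\<forall>i\<in>I. fin_opt A B {u. B u \<in> X i} g T (rho i x) (us i)" by metis
  then show ?thesis by (rule finite_horizon_decomposition[THEN conjunct2])
qed

corollary infinite_horizon_value_split:
  assumes "\<forall>i\<in>I. \<forall>x\<in>X i. \<exists>u. inf_opt A B {u. B u \<in> X i} g \<alpha> x u" and "\<alpha> > 0"
  shows "Jinf_star A B UNIV g \<alpha> x = (\<Sum>i\<in>I. Jinf_star A B {u. B u \<in> X i} g \<alpha> (rho i x))"
proof -
  have "\<forall>i\<in>I. \<exists>u. inf_opt A B {u. B u \<in> X i} g \<alpha> (rho i x) u" using assms rho_mem by blast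
  then obtain us where "\<forall>i\<in>I. inf_opt A B {u. B u \<in> X i} g \<alpha> (rho i x) (us i)" by metis
  then show ?thesis using infinite_horizon_decomposition \<open>\<alpha> > 0\<close> by blast
qed

end

lemma proj_mem_of_split:
  assumes unique: "\<exists>!w. components I X w \<and> v = sum w I"
    and split: "\<exists>w. components I (\<lambda>i. V \<inter> X i) w \<and> v = sum w I" and "i \<in> I"
  shows "proj I X i v \<in> V"
proof -
  obtain w where w: "components I (\<lambda>i. V \<inter> X i) w" "v = sum w I" using split by blast
  have "(THE w. components I X w \<and> v = sum w I) = w"
    by (rule the1_equality[OF unique]) (use w in blast)
  then show ?thesis unfolding proj_def using w \<open>i \<in> I\<close> by auto
qed

lemma separable_cost_of_linear_system:
  fixes sX :: "'f::field \<Rightarrow> 'x::ab_group_add \<Rightarrow> 'x" and sU :: "'f \<Rightarrow> 'u::ab_group_add \<Rightarrow> 'u"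
  assumes linA: "Vector_Spaces.linear sX sX A" and linB: "Vector_Spaces.linear sU sX B"
    and injB: "inj B" and "finite I"
    and decomp: "direct_sum_of sX UNIV I X" and invar: "\<forall>i\<in>I. A ` X i \<subseteq> X i"
    and range_split: "direct_sum_of sX (range B) I (\<lambda>i. range B \<inter> X i)"
    and g_sep: "\<forall>x. g x = (\<Sum>i\<in>I. g (proj I X i x))" and g_nonneg: "\<forall>x. g x \<ge> 0"
  shows "separable_cost A B I X g"
proof -
  have module: "module sX"
    using linA unfolding Vector_Spaces.linear_iff module_iff_vector_space by blast
  have subspace: "module.subspace sX (X i)" if "i \<in> I" for i
    using decomp that unfolding direct_sum_of_def by blast
  have unique: "\<And>v. \<exists>!w. components I X w \<and> v = sum w I"
    using decomp unfolding direct_sum_of_def by blast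
  show ?thesis
  proof
    show "finite I" by fact
    show "\<And>v. \<exists>!w. components I X w \<and> v = sum w I" by (rule unique)
    show "\<And>a b. A (a + b) = A a + A b" using linA unfolding Vector_Spaces.linear_iff by blast
    show "\<And>a b. B (a + b) = B a + B b" using linB unfolding Vector_Spaces.linear_iff by blast
    show "inj B" by (rule injB)
    show "\<And>i a. i \<in> I \<Longrightarrow> a \<in> X i \<Longrightarrow> A a \<in> X i" using invar by blast
    show "\<And>x. g x = (\<Sum>i\<in>I. g (proj I X i x))" "\<And>x. g x \<ge> 0"
      using g_sep g_nonneg by blast+
  next
    fix i a b assume "i \<in> I"
    then show "0 \<in> X i" using subspace module.subspace_def[OF module] by blast
    assume "a \<in> X i" "b \<in> X i"
    then show "a + b \<in> X i" using subspace[OF \<open>i \<in> I\<close>] module.subspace_def[OF module] by blast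
  next
    fix i u assume "i \<in> I"
    have "\<exists>w. components I (\<lambda>i. range B \<inter> X i) w \<and> B u = sum w I"
      using range_split unfolding direct_sum_of_def by blast
    then show "proj I X i (B u) \<in> range B"
      using \<open>i \<in> I\<close> by (rule proj_mem_of_split[OF unique])
  qed
qed

theorem theorem1:
  fixes sX :: "'f::field \<Rightarrow> 'x::ab_group_add \<Rightarrow> 'x"
    and sU :: "'f \<Rightarrow> 'u::ab_group_add \<Rightarrow> 'u"
    and A :: "'x \<Rightarrow> 'x" and B :: "'u \<Rightarrow> 'x" and g :: "'x \<Rightarrow> real"
    and r :: nat and X :: "nat \<Rightarrow> 'x set"
  defines "I \<equiv> {1..r}"
  defines "E \<equiv> (\<lambda>i. {u. B u \<in> X i})"
  assumes vsX: "fin_dim_vs sX" and vsU: "fin_dim_vs sU"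
    and linA: "Vector_Spaces.linear sX sX A"
    and linB: "Vector_Spaces.linear sU sX B" and injB: "inj B"
    and g_nonneg: "\<forall>x. g x \<ge> 0" and g_zero: "\<forall>x. g x = 0 \<longleftrightarrow> x = 0"
    and r_gt: "r > 1"
    and decomp: "direct_sum_of sX UNIV I X"
    and invar: "\<forall>i\<in>I. A ` X i \<subseteq> X i"
    and g_sep: "\<forall>x. g x = (\<Sum>i\<in>I. g (proj I X i x))"
    and range_split: "direct_sum_of sX (range B) I (\<lambda>i. range B \<inter> X i)"
  shows
    "(\<forall>T::nat. T > 0 \<longrightarrow>
        (\<forall>x. \<exists>u. fin_opt A B UNIV g T x u) \<longrightarrow>
        (\<forall>i\<in>I. \<forall>x\<in>X i. \<exists>u. fin_opt A B (E i) g T x u) \<longrightarrow>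
        (\<forall>x. Jfin_star A B UNIV g T x = (\<Sum>i\<in>I. Jfin_star A B (E i) g T (proj I X i x)) \<and>
             (\<forall>us :: nat \<Rightarrow> nat \<Rightarrow> 'u.
                (\<forall>i\<in>I. fin_opt A B (E i) g T (proj I X i x) (us i)) \<longrightarrow>
                (\<exists>u. fin_opt A B UNIV g T x u \<and> u = (\<lambda>t. \<Sum>i\<in>I. us i t)))))
     \<and>
     (\<forall>\<alpha>::real. 0 < \<alpha> \<and> \<alpha> < 1 \<longrightarrow>
        (\<forall>x. \<exists>u. inf_opt A B UNIV g \<alpha> x u) \<longrightarrow>
        (\<forall>i\<in>I. \<forall>x\<in>X i. \<exists>u. inf_opt A B (E i) g \<alpha> x u) \<longrightarrow>
        (\<forall>x. Jinf_star A B UNIV g \<alpha> x = (\<Sum>i\<in>I. Jinf_star A B (E i) g \<alpha> (proj I X i x)) \<and>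
             (\<forall>us :: nat \<Rightarrow> nat \<Rightarrow> 'u.
                (\<forall>i\<in>I. inf_opt A B (E i) g \<alpha> (proj I X i x) (us i)) \<longrightarrow>
                (\<exists>u. inf_opt A B UNIV g \<alpha> x u \<and> u = (\<lambda>t. \<Sum>i\<in>I. us i t)))))"
proof -
  interpret separable_cost A B I X g
    by (rule separable_cost_of_linear_system[OF linA linB injB _ decomp invar range_split g_sep g_nonneg])
      (simp add: I_def)
  show ?thesis
    unfolding E_def
    using finite_horizon_decomposition finite_horizon_value_split
      infinite_horizon_decomposition infinite_horizon_value_split
    by (intro conjI allI impI) blast+
qed

end
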